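(* Let $X_1$ be a random variable with $\mathbb EX_1=0$, $\operatorname{Var}X_1=1$, such that $\varphi(t)=\log\mathbb Ee^{tX_1}<\infty$ for all $t\geq-\sigma_0$ for some $\sigma_0>0$, and let $I(s)=\sup_{t\geq0}(st-\varphi(t))$, $s\geq0$. Then: (i) the condition "for every $\varepsilon>0$, $\sup_{t\geq\varepsilon}\frac{\varphi(t)}{t^2/2}<1$" is equivalent to the condition "for every $\varepsilon>0$, $\inf_{s\geq\varepsilon}\frac{I(s)}{s^2/2}>1$"; (ii) for $q\in\{3,4,\ldots\}$ and $\kappa>0$, the condition $\varphi(t)=\frac{t^2}2-\kappa t^q+o(t^q)$ as $t\downarrow0$ is equivalent to the condition $I(s)=\frac{s^2}2+\kappa s^q+o(s^q)$ as $s\downarrow0$. *)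

theory Defs
  imports "HOL-Probability.Probability" "HOL-Library.Landau_Symbols"
begin

definition cgf :: "'a measure \<Rightarrow> ('a \<Rightarrow> real) \<Rightarrow> real \<Rightarrow> real" where
  "cgf M X t = ln (integral\<^sup>L M (\<lambda>x. exp (t * X x)))"

definition rate :: "'a measure \<Rightarrow> ('a \<Rightarrow> real) \<Rightarrow> real \<Rightarrow> ereal" where
  "rate M X s = (SUP t\<in>{0..}. ereal (s * t - cgf M X t))"

end

theory Submission
  imports Defs
begin

text \<open>Only three properties of \<open>\<phi> = cgf M X\<close> matter: convexity on \<open>[-\<sigma>0, \<infinity>)\<close>,
  \<open>\<phi> 0 = 0\<close>, and \<open>\<phi> \<ge> 0\<close> (Jensen, since \<open>E X = 0\<close>).

  An upper bound on \<open>\<phi>\<close> gives a lower bound on \<open>I\<close> by taking \<open>t = s\<close> in the supremum.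
  Dually, at each \<open>t > 0\<close> a supporting line of \<open>\<phi>\<close> with slope \<open>g \<ge> 0\<close> gives
  \<open>\<phi> t = g t - I g\<close>, so lower bounds on \<open>I\<close> turn into upper bounds on \<open>\<phi>\<close>; in (i) this is
  combined with AM-GM. In the remaining directions of (ii) the supremum is localised to the scale
  of \<open>s\<close>: points beyond a fixed \<open>\<delta>\<close> lose by convexity, points with \<open>2 s \<le> t \<le> \<delta>\<close> lose against
  the quadratic term, and for \<open>t \<le> 2 s\<close> the identity \<open>s t - t\<^sup>2/2 = s\<^sup>2/2 - (t - s)\<^sup>2/2\<close>
  absorbs \<open>\<kappa> (t\<^sup>q - s\<^sup>q) = O(s\<^sup>q\<^sup>-\<^sup>1 \<bar>t - s\<bar>)\<close> up to \<open>O(s\<^sup>2\<^sup>q\<^sup>-\<^sup>2) = o(s\<^sup>q)\<close>.\<close>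

lemma (in prob_space) integral_exp_pos:
  fixes f :: "'a \<Rightarrow> real"
  assumes "integrable M (\<lambda>x. exp (f x))"
  shows "0 < (\<integral>x. exp (f x) \<partial>M)"
proof -
  have "(\<integral>x. exp (f x) \<partial>M) \<noteq> 0"
  proof
    assume "(\<integral>x. exp (f x) \<partial>M) = 0"
    then have "AE x in M. exp (f x) = 0"
      using integral_nonneg_eq_0_iff_AE[OF assms] by simp
    then show False by simp
  qed
  moreover have "0 \<le> (\<integral>x. exp (f x) \<partial>M)" by (auto intro: integral_nonneg)
  ultimately show ?thesis by linarith
qed

lemma (in prob_space) cgf_zero: "cgf M X 0 = 0"
  by (simp add: cgf_def prob_space)

lemma (in prob_space) cgf_nonneg:
  assumes "integrable M X" "expectation X = 0" "integrable M (\<lambda>x. exp (t * X x))"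
  shows "0 \<le> cgf M X t"
proof -
  have "1 = (\<integral>x. 1 + t * X x \<partial>M)" using assms(1,2) by (simp add: prob_space)
  also have "\<dots> \<le> (\<integral>x. exp (t * X x) \<partial>M)"
    using assms(1,3) by (intro integral_mono) (auto intro: exp_ge_add_one_self)
  finally show ?thesis unfolding cgf_def by simp
qed

lemma (in prob_space) convex_on_cgf:
  assumes "convex I" and integrable: "\<And>t. t \<in> I \<Longrightarrow> integrable M (\<lambda>x. exp (t * X x))"
  shows "convex_on I (cgf M X)"
proof (rule convex_onI)
  fix l t1 t2 :: real
  assume l: "0 < l" "l < 1" and t12: "t1 \<in> I" "t2 \<in> I"
  define t where "t = (1 - l) * t1 + l * t2"
  have "t \<in> I" unfolding t_def using convexD[OF \<open>convex I\<close> t12, of "1 - l" l] l by simp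
  define A where "A = (\<integral>x. exp (t1 * X x) \<partial>M)"
  define B where "B = (\<integral>x. exp (t2 * X x) \<partial>M)"
  define c where "c = (1 - l) * ln A + l * ln B"
  have AB: "0 < A" "0 < B" unfolding A_def B_def using integral_exp_pos integrable t12 by auto
  \<comment> \<open>Hoelder in disguise: after normalising by \<open>A\<close> and \<open>B\<close>, convexity of \<open>exp\<close> bounds the
    integrand by a convex combination of two densities of integral \<open>1\<close>\<close>
  have pointwise: "exp (t * X x) * exp (- c) \<le> (1 - l) * (exp (t1 * X x) / A) + l * (exp (t2 * X x) / B)"
    for x
  proof -
    have "exp ((1 - l) * (t1 * X x - ln A) + l * (t2 * X x - ln B))
        \<le> (1 - l) * exp (t1 * X x - ln A) + l * exp (t2 * X x - ln B)"
      using convex_onD[OF exp_convex, of l "t1 * X x - ln A" "t2 * X x - ln B"] l by simp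
    moreover have "(1 - l) * (t1 * X x - ln A) + l * (t2 * X x - ln B) = t * X x + - c"
      unfolding t_def c_def by (simp add: algebra_simps)
    ultimately show ?thesis using AB by (simp add: exp_diff exp_minus divide_inverse)
  qed
  have "(\<integral>x. exp (t * X x) \<partial>M) * exp (- c) = (\<integral>x. exp (t * X x) * exp (- c) \<partial>M)" by simp
  also have "\<dots> \<le> (\<integral>x. (1 - l) * (exp (t1 * X x) / A) + l * (exp (t2 * X x) / B) \<partial>M)"
    using integrable \<open>t \<in> I\<close> t12 pointwise by (intro integral_mono) auto
  also have "\<dots> = (1 - l) * (A / A) + l * (B / B)"
    using integrable t12 unfolding A_def B_def by simp
  also have "\<dots> = 1" using AB by simp
  finally have "(\<integral>x. exp (t * X x) \<partial>M) \<le> exp c" by (simp add: exp_minus field_simps)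
  moreover have "0 < (\<integral>x. exp (t * X x) \<partial>M)" using integral_exp_pos integrable \<open>t \<in> I\<close> by simp
  ultimately have "cgf M X t \<le> c" unfolding cgf_def using ln_le_cancel_iff[of _ "exp c"] by simp
  then show "cgf M X ((1 - l) *\<^sub>R t1 + l *\<^sub>R t2) \<le> (1 - l) * cgf M X t1 + l * cgf M X t2"
    unfolding t_def c_def A_def B_def cgf_def by simp
qed fact

definition legendre :: "(real \<Rightarrow> real) \<Rightarrow> real \<Rightarrow> ereal" where
  "legendre \<phi> s = (SUP t\<in>{0..}. ereal (s * t - \<phi> t))"

lemma rate_eq_legendre: "rate M X = legendre (cgf M X)"
  by (simp add: fun_eq_iff rate_def legendre_def)

lemma legendre_ge: "0 \<le> t \<Longrightarrow> ereal (s * t - \<phi> t) \<le> legendre \<phi> s"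
  unfolding legendre_def by (rule SUP_upper) auto

lemma legendre_le: "(\<And>t. 0 \<le> t \<Longrightarrow> s * t - \<phi> t \<le> c) \<Longrightarrow> legendre \<phi> s \<le> ereal c"
  unfolding legendre_def by (rule SUP_least) auto

lemma legendre_nonneg: "\<phi> 0 \<le> 0 \<Longrightarrow> 0 \<le> legendre \<phi> s"
  by (rule order_trans[OF _ legendre_ge[of 0]]) (simp_all add: zero_ereal_def)

lemma legendre_ge_diagonal: "0 \<le> s \<Longrightarrow> ereal (s\<^sup>2 - \<phi> s) \<le> legendre \<phi> s"
  using legendre_ge[of s s \<phi>] by (simp add: power2_eq_square)

lemma SUP_ereal_less_ereal_iff:
  fixes f :: "'a \<Rightarrow> real"
  shows "(SUP x\<in>A. ereal (f x)) < ereal b \<longleftrightarrow> (\<exists>c<b. \<forall>x\<in>A. f x \<le> c)"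
proof
  assume "(SUP x\<in>A. ereal (f x)) < ereal b"
  then obtain c where c: "(SUP x\<in>A. ereal (f x)) < ereal c" "c < b"
    using ereal_dense2 by force
  have "f x \<le> c" if "x \<in> A" for x
  proof -
    have "ereal (f x) < ereal c" using SUP_upper[OF that, of "\<lambda>x. ereal (f x)"] c(1) by (rule le_less_trans)
    then show ?thesis by simp
  qed
  with c(2) show "\<exists>c<b. \<forall>x\<in>A. f x \<le> c" by blast
next
  assume "\<exists>c<b. \<forall>x\<in>A. f x \<le> c"
  then obtain c where "c < b" "\<And>x. x \<in> A \<Longrightarrow> f x \<le> c" by blast
  then have "(SUP x\<in>A. ereal (f x)) \<le> ereal c" by (auto intro: SUP_least)
  with \<open>c < b\<close> show "(SUP x\<in>A. ereal (f x)) < ereal b" by (simp add: le_less_trans)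
qed

lemma ereal_less_INF_iff:
  fixes h :: "'a \<Rightarrow> ereal"
  shows "ereal b < (INF x\<in>A. h x) \<longleftrightarrow> (\<exists>c>b. \<forall>x\<in>A. ereal c \<le> h x)"
proof
  assume "ereal b < (INF x\<in>A. h x)"
  then obtain c where c: "ereal b < ereal c" "ereal c < (INF x\<in>A. h x)"
    using ereal_dense2 by blast
  have "ereal c \<le> h x" if "x \<in> A" for x
    using INF_lower[OF that, of h] c(2) by simp
  with c(1) show "\<exists>c>b. \<forall>x\<in>A. ereal c \<le> h x" by auto
next
  assume "\<exists>c>b. \<forall>x\<in>A. ereal c \<le> h x"
  then obtain c where "b < c" "\<And>x. x \<in> A \<Longrightarrow> ereal c \<le> h x" by blast
  then have "ereal c \<le> (INF x\<in>A. h x)" by (auto intro: INF_greatest)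
  with \<open>b < c\<close> show "ereal b < (INF x\<in>A. h x)" using less_le_trans[of "ereal b" "ereal c"] by simp
qed

lemma convex_on_supporting_line:
  fixes \<phi> :: "real \<Rightarrow> real"
  assumes convex: "convex_on {a..} \<phi>" and "a < t"
  obtains g where "\<And>u. a \<le> u \<Longrightarrow> \<phi> t + g * (u - t) \<le> \<phi> u"
proof -
  define slope where "slope u = (\<phi> u - \<phi> t) / (u - t)" for u
  have slope_mono: "slope u \<le> slope w" if "a \<le> u" "u < t" "t < w" for u w
  proof -
    have "(\<phi> u - \<phi> t) / (u - t) \<le> (\<phi> t - \<phi> w) / (t - w)"
      using convex_on_slope_le[OF convex, of u w t] that by auto
    then show ?thesis unfolding slope_def by (metis minus_diff_eq minus_divide_divide)
  qed
  define g where "g = Inf (slope ` {t<..})"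
  have "bdd_below (slope ` {t<..})"
    using slope_mono[of a] \<open>a < t\<close> by (intro bdd_belowI2[of _ "slope a"]) auto
  then have above: "g \<le> slope w" if "t < w" for w
    unfolding g_def using that by (auto intro: cInf_lower)
  have below: "slope u \<le> g" if "a \<le> u" "u < t" for u
    unfolding g_def using slope_mono that by (auto intro: cInf_greatest)
  have "\<phi> t + g * (u - t) \<le> \<phi> u" if "a \<le> u" for u
  proof (cases u t rule: linorder_cases)
    case less
    then show ?thesis using below[OF that less] by (simp add: slope_def neg_divide_le_eq)
  next
    case greater
    then show ?thesis using above[OF greater] by (simp add: slope_def pos_le_divide_eq)
  qed simp
  then show ?thesis by (rule that)
qed

lemma convex_on_le_chord_zero:
  fixes \<phi> :: "real \<Rightarrow> real"
  assumes "convex_on {a..} \<phi>" "a \<le> 0" "\<phi> 0 = 0" "0 \<le> t" "t \<le> u"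
  shows "\<phi> t \<le> t / u * \<phi> u"
proof (cases "u = 0")
  case False
  then have "\<phi> ((1 - t / u) *\<^sub>R 0 + (t / u) *\<^sub>R u) \<le> (1 - t / u) * \<phi> 0 + (t / u) * \<phi> u"
    using convex_onD[OF assms(1), of "t / u" 0 u] assms by auto
  with False assms(3) show ?thesis by simp
qed (use assms in simp)

lemma mult_le_weighted_squares:
  fixes g t c :: real
  assumes "0 < c"
  shows "g * t \<le> c * g\<^sup>2 / 2 + t\<^sup>2 / (2 * c)"
proof -
  have "0 \<le> (t - c * g)\<^sup>2" by simp
  then have "c * (g * t) \<le> c * (c * g\<^sup>2 / 2 + t\<^sup>2 / (2 * c))"
    using assms by (simp add: power2_eq_square algebra_simps)
  then show ?thesis using assms by simp
qed

lemma mult_le_squares_of_le_half: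
  fixes g t :: real
  assumes "0 \<le> g" "2 * g \<le> t"
  shows "g * t \<le> g\<^sup>2 / 2 + 3 / 8 * t\<^sup>2"
proof -
  have "(t / 2)\<^sup>2 \<le> (t - g)\<^sup>2" using assms by (intro power_mono) auto
  then show ?thesis by (simp add: power2_eq_square algebra_simps)
qed

lemma abs_power_diff_le:
  fixes x y M :: real
  assumes "\<bar>x\<bar> \<le> M" "\<bar>y\<bar> \<le> M"
  shows "\<bar>x ^ q - y ^ q\<bar> \<le> q * M ^ (q - 1) * \<bar>x - y\<bar>"
proof (cases "M = 0")
  case True
  then show ?thesis using assms by simp
next
  case False
  then have M: "0 < M" using assms by linarith
  have "\<bar>(x / M) ^ q - (y / M) ^ q\<bar> \<le> q * \<bar>x / M - y / M\<bar>"
    using norm_power_diff[of "x / M" "y / M" q] assms M by (simp add: abs_divide)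
  then have "M ^ q * \<bar>(x / M) ^ q - (y / M) ^ q\<bar> \<le> M ^ q * (q * \<bar>x / M - y / M\<bar>)"
    using M by (intro mult_left_mono) auto
  moreover have "M ^ q * \<bar>(x / M) ^ q - (y / M) ^ q\<bar> = \<bar>x ^ q - y ^ q\<bar>"
    using M by (simp add: power_divide diff_divide_distrib[symmetric] abs_divide)
  moreover have "M ^ q * (q * \<bar>x / M - y / M\<bar>) = q * M ^ (q - 1) * \<bar>x - y\<bar>"
  proof (cases q)
    case (Suc n)
    have "\<bar>x / M - y / M\<bar> = \<bar>x - y\<bar> / M" using M by (simp add: diff_divide_distrib[symmetric])
    then show ?thesis using M Suc by (simp add: field_simps)
  qed simp
  ultimately show ?thesis by simp
qed

lemma eventually_power_le_sq:
  fixes c \<epsilon> :: real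
  assumes "3 \<le> q" "0 < \<epsilon>"
  shows "\<forall>\<^sub>F t in at_right 0. c * t ^ q \<le> \<epsilon> * t\<^sup>2"
proof (rule eventually_at_rightI)
  fix t assume t: "t \<in> {0<..<min 1 (\<epsilon> / (\<bar>c\<bar> + 1))}"
  have "c * t ^ q \<le> \<bar>c\<bar> * t ^ q" using t by (intro mult_right_mono) auto
  also have "\<dots> \<le> \<bar>c\<bar> * t ^ 3" using t assms by (intro mult_left_mono power_decreasing) auto
  also have "\<dots> = (\<bar>c\<bar> * t) * t\<^sup>2" by (simp add: power2_eq_square power3_eq_cube)
  also have "\<dots> \<le> \<epsilon> * t\<^sup>2"
  proof (intro mult_right_mono)
    have "\<bar>c\<bar> * t \<le> (\<bar>c\<bar> + 1) * t" using t by simp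
    also have "\<dots> < \<epsilon>" using t by (simp add: less_divide_eq mult.commute)
    finally show "\<bar>c\<bar> * t \<le> \<epsilon>" by simp
  qed simp
  finally show "c * t ^ q \<le> \<epsilon> * t\<^sup>2" .
qed (use assms in simp)

lemma eventually_quadratic_perturbation:
  fixes \<kappa> \<eta> \<eta>' :: real
  assumes "3 \<le> q" "0 < \<eta>" "0 \<le> \<eta>'" "\<eta>' * 2 ^ q \<le> \<eta> / 2"
  shows "\<forall>\<^sub>F a in at_right 0. \<forall>b. 0 \<le> b \<and> b \<le> 2 * a \<longrightarrow>
           a * b - b\<^sup>2 / 2 + \<kappa> * b ^ q + \<eta>' * b ^ q \<le> a\<^sup>2 / 2 + \<kappa> * a ^ q + \<eta> * a ^ q"
proof (rule eventually_at_rightI)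
  define C where "C = \<bar>\<kappa>\<bar> * q * 2 ^ (q - 1)"
  show "0 < min 1 (\<eta> / (C\<^sup>2 + 1))" using assms by (simp add: add_nonneg_pos)
  fix a assume a: "a \<in> {0<..<min 1 (\<eta> / (C\<^sup>2 + 1))}"
  have C2a: "C\<^sup>2 * a \<le> \<eta>"
  proof -
    have "C\<^sup>2 * a \<le> (C\<^sup>2 + 1) * a" using a by simp
    also have "\<dots> \<le> \<eta>" using a by (simp add: less_divide_eq mult.commute add_nonneg_pos)
    finally show ?thesis .
  qed
  have "(C * a ^ (q - 1))\<^sup>2 = C\<^sup>2 * a ^ (q - 2) * a ^ q"
  proof -
    have "(q - 1) + (q - 1) = (q - 2) + q" using assms by simp
    then show ?thesis by (simp add: power2_eq_square power_add[symmetric] flip: power_add)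
  qed
  also have "\<dots> \<le> C\<^sup>2 * a * a ^ q"
    using a assms by (intro mult_right_mono mult_left_mono) (auto intro: power_decreasing[of 1, simplified])
  also have "\<dots> \<le> \<eta> * a ^ q" using a C2a by (intro mult_right_mono) auto
  finally have small: "(C * a ^ (q - 1))\<^sup>2 \<le> \<eta> * a ^ q" .
  show "\<forall>b. 0 \<le> b \<and> b \<le> 2 * a \<longrightarrow>
          a * b - b\<^sup>2 / 2 + \<kappa> * b ^ q + \<eta>' * b ^ q \<le> a\<^sup>2 / 2 + \<kappa> * a ^ q + \<eta> * a ^ q"
  proof (intro allI impI, elim conjE)
    fix b assume b: "0 \<le> b" "b \<le> 2 * a"
    have "\<kappa> * (b ^ q - a ^ q) \<le> \<bar>\<kappa>\<bar> * \<bar>b ^ q - a ^ q\<bar>" by (simp add: abs_mult[symmetric])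
    also have "\<dots> \<le> \<bar>\<kappa>\<bar> * (q * (2 * a) ^ (q - 1) * \<bar>b - a\<bar>)"
      using a b by (intro mult_left_mono abs_power_diff_le) auto
    also have "\<dots> = C * a ^ (q - 1) * \<bar>b - a\<bar>" unfolding C_def by (simp add: power_mult_distrib)
    finally have perturbation: "\<kappa> * (b ^ q - a ^ q) \<le> C * a ^ (q - 1) * \<bar>b - a\<bar>" .
    have "C * a ^ (q - 1) * \<bar>b - a\<bar> \<le> (C * a ^ (q - 1))\<^sup>2 / 2 + (b - a)\<^sup>2 / 2"
      using mult_le_weighted_squares[of 1 "C * a ^ (q - 1)" "\<bar>b - a\<bar>"] by simp
    moreover have "\<eta>' * b ^ q \<le> \<eta> / 2 * a ^ q"
    proof -
      have "\<eta>' * b ^ q \<le> \<eta>' * (2 * a) ^ q" using b assms by (intro mult_left_mono power_mono) auto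
      also have "\<dots> = (\<eta>' * 2 ^ q) * a ^ q" by (simp add: power_mult_distrib)
      also have "\<dots> \<le> \<eta> / 2 * a ^ q" using assms a by (intro mult_right_mono) auto
      finally show ?thesis .
    qed
    moreover have "a * b - b\<^sup>2 / 2 = a\<^sup>2 / 2 - (b - a)\<^sup>2 / 2" by (simp add: power2_eq_square field_simps)
    ultimately show "a * b - b\<^sup>2 / 2 + \<kappa> * b ^ q + \<eta>' * b ^ q \<le> a\<^sup>2 / 2 + \<kappa> * a ^ q + \<eta> * a ^ q"
      using perturbation small by (simp add: algebra_simps)
  qed
qed

lemma smallo_power_at_right_0_iff:
  fixes f :: "real \<Rightarrow> real"
  shows "f \<in> o[at_right 0](\<lambda>t. t ^ q) \<longleftrightarrow> (\<forall>\<eta>>0. \<forall>\<^sub>F t in at_right 0. \<bar>f t\<bar> \<le> \<eta> * t ^ q)"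
proof -
  have "(\<forall>\<^sub>F t in at_right 0. \<bar>f t\<bar> \<le> \<eta> * \<bar>t ^ q\<bar>) \<longleftrightarrow> (\<forall>\<^sub>F t in at_right 0. \<bar>f t\<bar> \<le> \<eta> * t ^ q)"
    for \<eta>
    by (rule eventually_subst) (use eventually_at_right_less[of 0] in \<open>eventually_elim, simp\<close>)
  then show ?thesis unfolding smallo_def by simp
qed

lemma real_of_ereal_expansion_iff:
  fixes h :: "real \<Rightarrow> ereal" and f :: "real \<Rightarrow> real"
  assumes "\<And>s. h s \<noteq> -\<infinity>"
  shows "((\<forall>\<^sub>F s in at_right 0. h s \<noteq> \<infinity>) \<and> (\<lambda>s. real_of_ereal (h s) - f s) \<in> o[at_right 0](\<lambda>s. s ^ q))
     \<longleftrightarrow> (\<forall>\<eta>>0. \<forall>\<^sub>F s in at_right 0.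
                  ereal (f s - \<eta> * s ^ q) \<le> h s \<and> h s \<le> ereal (f s + \<eta> * s ^ q))"
    (is "?expansion \<longleftrightarrow> (\<forall>\<eta>>0. \<forall>\<^sub>F s in at_right 0. ?bounds \<eta> s)")
proof
  assume ?expansion
  then have finite: "\<forall>\<^sub>F s in at_right 0. h s \<noteq> \<infinity>"
    and close: "\<forall>\<eta>>0. \<forall>\<^sub>F s in at_right 0. \<bar>real_of_ereal (h s) - f s\<bar> \<le> \<eta> * s ^ q"
    unfolding smallo_power_at_right_0_iff by auto
  show "\<forall>\<eta>>0. \<forall>\<^sub>F s in at_right 0. ?bounds \<eta> s"
  proof (intro allI impI)
    fix \<eta> :: real assume "0 < \<eta>"
    show "\<forall>\<^sub>F s in at_right 0. ?bounds \<eta> s" using finite close[rule_format, OF \<open>0 < \<eta>\<close>]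
    proof eventually_elim
      case (elim s)
      then show ?case using assms[of s] by (cases "h s") (auto simp: abs_le_iff)
    qed
  qed
next
  assume bounds: "\<forall>\<eta>>0. \<forall>\<^sub>F s in at_right 0. ?bounds \<eta> s"
  have finite: "\<forall>\<^sub>F s in at_right 0. h s \<noteq> \<infinity>"
    using bounds[rule_format, of 1] by (auto elim: eventually_mono)
  have close: "\<forall>\<^sub>F s in at_right 0. \<bar>real_of_ereal (h s) - f s\<bar> \<le> \<eta> * s ^ q" if "0 < \<eta>" for \<eta>
    using bounds[rule_format, OF that]
  proof eventually_elim
    case (elim s)
    then show ?case by (cases "h s") (auto simp: abs_le_iff)
  qed
  show ?expansion unfolding smallo_power_at_right_0_iff using finite close by blast
qed

lemma eventually_abs_diff_le_iff:
  fixes f g h :: "'a \<Rightarrow> real"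
  shows "(\<forall>\<^sub>F x in F. \<bar>f x - g x\<bar> \<le> h x)
     \<longleftrightarrow> (\<forall>\<^sub>F x in F. g x - h x \<le> f x) \<and> (\<forall>\<^sub>F x in F. f x \<le> g x + h x)"
  by (auto simp: abs_le_iff eventually_conj_iff[symmetric] elim!: eventually_mono)

lemma eventually_at_right_0_closedE:
  fixes P :: "real \<Rightarrow> bool"
  assumes "\<forall>\<^sub>F t in at_right 0. P t" "P 0"
  obtains \<delta> where "0 < \<delta>" "\<And>t. 0 \<le> t \<Longrightarrow> t \<le> \<delta> \<Longrightarrow> P t"
proof -
  obtain b where "0 < b" and b: "\<And>t. 0 < t \<Longrightarrow> t < b \<Longrightarrow> P t"
    using assms(1) unfolding eventually_at_right_field by auto
  show ?thesis
  proof (rule that[of "b / 2"])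
    show "0 < b / 2" using \<open>0 < b\<close> by simp
    show "P t" if "0 \<le> t" "t \<le> b / 2" for t
      using b[of t] assms(2) that \<open>0 < b\<close> by (cases "t = 0") auto
  qed
qed

locale cgf_like =
  fixes \<phi> :: "real \<Rightarrow> real" and a :: real
  assumes convex: "convex_on {a..} \<phi>" and a_neg: "a < 0" and zero: "\<phi> 0 = 0"
    and nonneg: "\<And>t. 0 \<le> t \<Longrightarrow> 0 \<le> \<phi> t"
begin

lemma legendre_attained:
  assumes "0 < t"
  obtains g where "0 \<le> g" "legendre \<phi> g = ereal (g * t - \<phi> t)"
    "\<And>u. a \<le> u \<Longrightarrow> \<phi> t + g * (u - t) \<le> \<phi> u"
proof -
  obtain g where line: "\<And>u. a \<le> u \<Longrightarrow> \<phi> t + g * (u - t) \<le> \<phi> u"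
    using convex_on_supporting_line[OF convex, of t] a_neg assms by force
  have "0 \<le> g * t" using line[of 0] a_neg nonneg[of t] zero assms by simp
  then have "0 \<le> g" using assms by (simp add: zero_le_mult_iff)
  moreover have "legendre \<phi> g = ereal (g * t - \<phi> t)"
  proof (rule antisym)
    show "legendre \<phi> g \<le> ereal (g * t - \<phi> t)"
      using line a_neg by (intro legendre_le) (force simp: algebra_simps)
    show "ereal (g * t - \<phi> t) \<le> legendre \<phi> g" using assms by (intro legendre_ge) simp
  qed
  ultimately show ?thesis using that line by blast
qed

lemma exists_below_line_of_legendre_pos:
  assumes "0 < legendre \<phi> c"
  shows "\<exists>u>0. \<phi> u < c * u"
proof (rule ccontr)
  assume "\<not> (\<exists>u>0. \<phi> u < c * u)"
  then have "c * u \<le> \<phi> u" if "0 < u" for u using that by (meson not_less)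
  then have "c * u - \<phi> u \<le> 0" if "0 \<le> u" for u using that zero by (cases "u = 0") auto
  then have "legendre \<phi> c \<le> ereal 0" by (rule legendre_le)
  with assms show False by (simp add: zero_ereal_def)
qed

lemma mult_le_beyond_chord:
  assumes "0 < \<delta>" "\<delta> \<le> t" "s \<le> \<phi> \<delta> / \<delta>"
  shows "s * t \<le> \<phi> t"
proof -
  have "\<phi> \<delta> \<le> \<delta> / t * \<phi> t"
    using convex_on_le_chord_zero[OF convex less_imp_le[OF a_neg] zero, of \<delta> t] assms by simp
  then have "\<phi> \<delta> / \<delta> * t \<le> \<phi> t" using assms by (simp add: field_simps)
  moreover have "s * t \<le> \<phi> \<delta> / \<delta> * t" using assms by (intro mult_right_mono) auto
  ultimately show ?thesis by linarith
qed

lemma eventually_legendre_attained_le: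
  assumes "0 < \<delta>" "0 < legendre \<phi> (\<delta> / 2)"
  shows "\<forall>\<^sub>F t in at_right 0. \<exists>g. 0 \<le> g \<and> g \<le> \<delta> \<and> legendre \<phi> g = ereal (g * t - \<phi> t)"
proof -
  obtain u where "0 < u" "\<phi> u < \<delta> / 2 * u"
    using exists_below_line_of_legendre_pos[OF assms(2)] by blast
  have "\<forall>\<^sub>F t in at_right 0. 0 < t \<and> 2 * t \<le> u"
    using \<open>0 < u\<close> by (intro eventually_at_rightI[of 0 "u / 2"]) auto
  then show ?thesis
  proof eventually_elim
    case (elim t)
    obtain g where "0 \<le> g" and g: "legendre \<phi> g = ereal (g * t - \<phi> t)"
      and line: "\<And>v. a \<le> v \<Longrightarrow> \<phi> t + g * (v - t) \<le> \<phi> v"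
      using legendre_attained elim by blast
    have "g * (u / 2) \<le> g * (u - t)" using \<open>0 \<le> g\<close> elim by (intro mult_left_mono) auto
    also have "\<dots> \<le> \<phi> u" using line[of u] nonneg[of t] a_neg \<open>0 < u\<close> elim by simp
    also have "\<dots> < \<delta> * (u / 2)" using \<open>\<phi> u < \<delta> / 2 * u\<close> by simp
    finally have "g \<le> \<delta>" using \<open>0 < u\<close> by simp
    with \<open>0 \<le> g\<close> g show ?case by blast
  qed
qed

lemma cgf_le_quadratic_of_legendre_ge_quadratic:
  assumes legendre_ge: "\<forall>\<epsilon>>0. \<exists>c>1. \<forall>s\<ge>\<epsilon>. ereal (c * (s\<^sup>2 / 2)) \<le> legendre \<phi> s"
    and "0 < \<epsilon>"
  shows "\<exists>c<1. \<forall>t\<ge>\<epsilon>. \<phi> t \<le> c * (t\<^sup>2 / 2)"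
proof -
  obtain c1 where "1 < c1" and c1: "\<And>s. \<epsilon> / 2 \<le> s \<Longrightarrow> ereal (c1 * (s\<^sup>2 / 2)) \<le> legendre \<phi> s"
    using legendre_ge \<open>0 < \<epsilon>\<close> by (meson half_gt_zero)
  have half: "ereal (s\<^sup>2 / 2) \<le> legendre \<phi> s" if s: "0 \<le> s" for s
  proof (cases "s = 0")
    case True
    then show ?thesis using legendre_nonneg zero by (simp add: zero_ereal_def)
  next
    case False
    with s have "0 < s" by simp
    then obtain c where "1 < c" and c: "ereal (c * (s\<^sup>2 / 2)) \<le> legendre \<phi> s"
      using legendre_ge by blast
    have "s\<^sup>2 / 2 \<le> c * (s\<^sup>2 / 2)" using \<open>1 < c\<close> by (simp add: mult_le_cancel_right1)
    then have "ereal (s\<^sup>2 / 2) \<le> ereal (c * (s\<^sup>2 / 2))" by simp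
    then show ?thesis using c by (rule order_trans)
  qed
  define c where "c = max (1 / c1) (3 / 4)"
  have "\<phi> t \<le> c * (t\<^sup>2 / 2)" if t: "\<epsilon> \<le> t" for t
  proof -
    obtain g where "0 \<le> g" and g: "legendre \<phi> g = ereal (g * t - \<phi> t)"
      using legendre_attained[of t] t \<open>0 < \<epsilon>\<close> by auto
    show ?thesis
    proof (cases "\<epsilon> / 2 \<le> g")
      case True
      have "c1 * (g\<^sup>2 / 2) \<le> g * t - \<phi> t" using c1[OF True] g by simp
      moreover have "g * t \<le> c1 * g\<^sup>2 / 2 + t\<^sup>2 / (2 * c1)"
        using \<open>1 < c1\<close> by (intro mult_le_weighted_squares) simp
      moreover have "t\<^sup>2 / (2 * c1) \<le> c * (t\<^sup>2 / 2)"
        using mult_right_mono[of "1 / c1" c "t\<^sup>2 / 2"] unfolding c_def by simp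
      ultimately show ?thesis by simp
    next
      case False
      have "g\<^sup>2 / 2 \<le> g * t - \<phi> t" using half[OF \<open>0 \<le> g\<close>] g by simp
      moreover have "g * t \<le> g\<^sup>2 / 2 + 3 / 8 * t\<^sup>2"
        using False t \<open>0 \<le> g\<close> by (intro mult_le_squares_of_le_half) auto
      moreover have "3 / 8 * t\<^sup>2 \<le> c * (t\<^sup>2 / 2)"
        using mult_right_mono[of "3 / 4" c "t\<^sup>2 / 2"] unfolding c_def by simp
      ultimately show ?thesis by simp
    qed
  qed
  moreover have "c < 1" unfolding c_def using \<open>1 < c1\<close> by simp
  ultimately show ?thesis by blast
qed

lemma quadratic_gap_iff:
  "(\<forall>\<epsilon>>0. (SUP t\<in>{\<epsilon>..}. ereal (\<phi> t / (t\<^sup>2 / 2))) < 1)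
     \<longleftrightarrow> (\<forall>\<epsilon>>0. (INF s\<in>{\<epsilon>..}. legendre \<phi> s / ereal (s\<^sup>2 / 2)) > 1)"
proof -
  have cgf_side: "(SUP t\<in>{\<epsilon>..}. ereal (\<phi> t / (t\<^sup>2 / 2))) < 1
      \<longleftrightarrow> (\<exists>c<1. \<forall>t\<ge>\<epsilon>. \<phi> t \<le> c * (t\<^sup>2 / 2))" if "0 < \<epsilon>" for \<epsilon>
  proof -
    have pointwise: "\<phi> t / (t\<^sup>2 / 2) \<le> c \<longleftrightarrow> \<phi> t \<le> c * (t\<^sup>2 / 2)" if "\<epsilon> \<le> t" for t c
      using that \<open>0 < \<epsilon>\<close> by (simp add: pos_divide_le_eq)
    show ?thesis
      by (simp only: one_ereal_def SUP_ereal_less_ereal_iff atLeast_iff Ball_def pointwise cong: imp_cong)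
  qed
  have legendre_side: "(INF s\<in>{\<epsilon>..}. legendre \<phi> s / ereal (s\<^sup>2 / 2)) > 1
      \<longleftrightarrow> (\<exists>c>1. \<forall>s\<ge>\<epsilon>. ereal (c * (s\<^sup>2 / 2)) \<le> legendre \<phi> s)" if "0 < \<epsilon>" for \<epsilon>
  proof -
    have pointwise: "ereal c \<le> legendre \<phi> s / ereal (s\<^sup>2 / 2) \<longleftrightarrow> ereal (c * (s\<^sup>2 / 2)) \<le> legendre \<phi> s"
      if "\<epsilon> \<le> s" for s c
      using that \<open>0 < \<epsilon>\<close> by (simp add: ereal_le_divide_pos mult.commute)
    show ?thesis
      by (simp only: one_ereal_def ereal_less_INF_iff atLeast_iff Ball_def pointwise cong: imp_cong)
  qed
  have "(\<forall>\<epsilon>>0. \<exists>c<1. \<forall>t\<ge>\<epsilon>. \<phi> t \<le> c * (t\<^sup>2 / 2))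
      \<longleftrightarrow> (\<forall>\<epsilon>>0. \<exists>c>1. \<forall>s\<ge>\<epsilon>. ereal (c * (s\<^sup>2 / 2)) \<le> legendre \<phi> s)"
  proof (intro iffI allI impI)
    fix \<epsilon> :: real
    assume "\<forall>\<epsilon>>0. \<exists>c<1. \<forall>t\<ge>\<epsilon>. \<phi> t \<le> c * (t\<^sup>2 / 2)" and "0 < \<epsilon>"
    then obtain c where "c < 1" and c: "\<And>t. \<epsilon> \<le> t \<Longrightarrow> \<phi> t \<le> c * (t\<^sup>2 / 2)" by blast
    have "ereal ((2 - c) * (s\<^sup>2 / 2)) \<le> legendre \<phi> s" if "\<epsilon> \<le> s" for s
    proof -
      have "(2 - c) * (s\<^sup>2 / 2) = s\<^sup>2 - c * (s\<^sup>2 / 2)" by (simp add: field_simps)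
      then have "(2 - c) * (s\<^sup>2 / 2) \<le> s\<^sup>2 - \<phi> s" using c[OF that] by linarith
      then have "ereal ((2 - c) * (s\<^sup>2 / 2)) \<le> ereal (s\<^sup>2 - \<phi> s)" by simp
      also have "\<dots> \<le> legendre \<phi> s" using that \<open>0 < \<epsilon>\<close> by (intro legendre_ge_diagonal) simp
      finally show ?thesis .
    qed
    with \<open>c < 1\<close> show "\<exists>c>1. \<forall>s\<ge>\<epsilon>. ereal (c * (s\<^sup>2 / 2)) \<le> legendre \<phi> s"
      by (intro exI[of _ "2 - c"]) auto
  qed (rule cgf_le_quadratic_of_legendre_ge_quadratic)
  then show ?thesis using cgf_side legendre_side by simp
qed

lemma legendre_le_of_cgf_lower:
  assumes "3 \<le> q" "0 \<le> \<kappa>" "0 < \<eta>"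
    and lower: "\<forall>\<eta>>0. \<forall>\<^sub>F t in at_right 0. t\<^sup>2 / 2 - \<kappa> * t ^ q - \<eta> * t ^ q \<le> \<phi> t"
  shows "\<forall>\<^sub>F s in at_right 0. legendre \<phi> s \<le> ereal (s\<^sup>2 / 2 + \<kappa> * s ^ q + \<eta> * s ^ q)"
proof -
  define \<eta>' where "\<eta>' = \<eta> / 2 ^ (q + 1)"
  have "0 < \<eta>'" "\<eta>' * 2 ^ q = \<eta> / 2" unfolding \<eta>'_def using \<open>0 < \<eta>\<close> by simp_all
  let ?local = "\<lambda>t. t\<^sup>2 / 2 - \<kappa> * t ^ q - \<eta>' * t ^ q \<le> \<phi> t \<and> (\<kappa> + \<eta>') * t ^ q \<le> 1 / 8 * t\<^sup>2"
  have "\<forall>\<^sub>F t in at_right 0. ?local t"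
    using lower \<open>0 < \<eta>'\<close> eventually_power_le_sq[OF \<open>3 \<le> q\<close>, of "1 / 8" "\<kappa> + \<eta>'"]
    by (auto intro: eventually_conj)
  moreover have "?local 0" using zero \<open>3 \<le> q\<close> by (simp add: power_0_left)
  ultimately obtain \<delta> where "0 < \<delta>" and local: "\<And>t. 0 \<le> t \<Longrightarrow> t \<le> \<delta> \<Longrightarrow> ?local t"
    by (rule eventually_at_right_0_closedE) blast
  have quadratic: "3 / 8 * t\<^sup>2 \<le> \<phi> t" if "0 \<le> t" "t \<le> \<delta>" for t
    using local[OF that] by (simp add: distrib_right)
  have "0 < 3 / 8 * \<delta>\<^sup>2" using \<open>0 < \<delta>\<close> by simp
  then have "0 < \<phi> \<delta>" using quadratic[of \<delta>] \<open>0 < \<delta>\<close> by linarith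
  have "\<forall>\<^sub>F s in at_right 0. s < \<phi> \<delta> / \<delta> \<and> 2 * s \<le> \<delta>"
    using \<open>0 < \<phi> \<delta>\<close> \<open>0 < \<delta>\<close> by (intro eventually_at_rightI[of 0 "min (\<phi> \<delta> / \<delta>) (\<delta> / 2)"]) auto
  with eventually_at_right_less[of 0]
    eventually_quadratic_perturbation[OF \<open>3 \<le> q\<close> \<open>0 < \<eta>\<close> less_imp_le[OF \<open>0 < \<eta>'\<close>]
      eq_refl[OF \<open>\<eta>' * 2 ^ q = \<eta> / 2\<close>], of \<kappa>]
  show ?thesis
  proof eventually_elim
    case (elim s)
    then have small_s: "0 < s" "s < \<phi> \<delta> / \<delta>" "2 * s \<le> \<delta>" by auto
    have "0 \<le> \<kappa> * s ^ q + \<eta> * s ^ q" using small_s \<open>0 \<le> \<kappa>\<close> \<open>0 < \<eta>\<close> by simp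
    show ?case
    proof (rule legendre_le)
      fix t :: real assume "0 \<le> t"
      consider "\<delta> \<le> t" | "2 * s \<le> t" "t \<le> \<delta>" | "t < 2 * s" by linarith
      then show "s * t - \<phi> t \<le> s\<^sup>2 / 2 + \<kappa> * s ^ q + \<eta> * s ^ q"
      proof cases
        case 1
        then have "s * t \<le> \<phi> t" using small_s \<open>0 < \<delta>\<close> by (intro mult_le_beyond_chord) auto
        then show ?thesis using \<open>0 \<le> \<kappa> * s ^ q + \<eta> * s ^ q\<close> zero_le_power2[of s] by linarith
      next
        case 2
        then have "s * t \<le> s\<^sup>2 / 2 + 3 / 8 * t\<^sup>2" using small_s by (intro mult_le_squares_of_le_half) auto
        then show ?thesis using quadratic[of t] 2 \<open>0 \<le> t\<close> \<open>0 \<le> \<kappa> * s ^ q + \<eta> * s ^ q\<close> by linarith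
      next
        case 3
        then have "t\<^sup>2 / 2 - \<kappa> * t ^ q - \<eta>' * t ^ q \<le> \<phi> t" using local[of t] small_s \<open>0 \<le> t\<close> by simp
        moreover have "s * t - t\<^sup>2 / 2 + \<kappa> * t ^ q + \<eta>' * t ^ q \<le> s\<^sup>2 / 2 + \<kappa> * s ^ q + \<eta> * s ^ q"
          using elim 3 \<open>0 \<le> t\<close> by simp
        ultimately show ?thesis by linarith
      qed
    qed
  qed
qed

lemma cgf_le_of_legendre_lower:
  assumes "3 \<le> q" "0 < \<kappa>" "0 < \<eta>"
    and lower: "\<forall>\<eta>>0. \<forall>\<^sub>F s in at_right 0. ereal (s\<^sup>2 / 2 + \<kappa> * s ^ q - \<eta> * s ^ q) \<le> legendre \<phi> s"
  shows "\<forall>\<^sub>F t in at_right 0. \<phi> t \<le> t\<^sup>2 / 2 - \<kappa> * t ^ q + \<eta> * t ^ q"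
proof -
  define \<eta>' where "\<eta>' = min \<kappa> (\<eta> / 2 ^ (q + 1))"
  have "0 < \<eta>'" "\<eta>' \<le> \<kappa>" "\<eta>' * 2 ^ q \<le> \<eta> / 2"
    unfolding \<eta>'_def using \<open>0 < \<kappa>\<close> \<open>0 < \<eta>\<close> by (auto simp: min_def field_simps)
  have "ereal (0\<^sup>2 / 2 + \<kappa> * 0 ^ q - \<eta>' * 0 ^ q) \<le> legendre \<phi> 0"
    using legendre_nonneg zero \<open>3 \<le> q\<close> by (simp add: zero_ereal_def power_0_left)
  then obtain \<delta> where "0 < \<delta>" and local: "\<And>g. 0 \<le> g \<Longrightarrow> g \<le> \<delta> \<Longrightarrow>
      ereal (g\<^sup>2 / 2 + \<kappa> * g ^ q - \<eta>' * g ^ q) \<le> legendre \<phi> g"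
    using eventually_at_right_0_closedE[OF lower[rule_format, OF \<open>0 < \<eta>'\<close>]] by blast
  have half: "ereal (g\<^sup>2 / 2) \<le> legendre \<phi> g" if "0 \<le> g" "g \<le> \<delta>" for g
  proof -
    have "\<eta>' * g ^ q \<le> \<kappa> * g ^ q" using \<open>\<eta>' \<le> \<kappa>\<close> that by (intro mult_right_mono) auto
    then have "ereal (g\<^sup>2 / 2) \<le> ereal (g\<^sup>2 / 2 + \<kappa> * g ^ q - \<eta>' * g ^ q)" by simp
    also have "\<dots> \<le> legendre \<phi> g" using local that .
    finally show ?thesis .
  qed
  have "ereal 0 < ereal ((\<delta> / 2)\<^sup>2 / 2)" using \<open>0 < \<delta>\<close> by simp
  also have "\<dots> \<le> legendre \<phi> (\<delta> / 2)" using \<open>0 < \<delta>\<close> by (intro half) auto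
  finally have "0 < legendre \<phi> (\<delta> / 2)" by (simp add: zero_ereal_def)
  note attained = eventually_legendre_attained_le[OF \<open>0 < \<delta>\<close> this]
  have "\<forall>\<^sub>F t in at_right 0. \<kappa> * t ^ q \<le> 1 / 2 * t\<^sup>2"
    using \<open>3 \<le> q\<close> by (rule eventually_power_le_sq) simp
  then show ?thesis
    using attained eventually_at_right_less[of 0]
      eventually_quadratic_perturbation[OF \<open>3 \<le> q\<close> \<open>0 < \<eta>\<close> less_imp_le[OF \<open>0 < \<eta>'\<close>]
        \<open>\<eta>' * 2 ^ q \<le> \<eta> / 2\<close>, of "- \<kappa>"]
  proof eventually_elim
    case (elim t)
    then obtain g where "0 \<le> g" "g \<le> \<delta>" and g: "legendre \<phi> g = ereal (g * t - \<phi> t)" by blast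
    show ?case
    proof (cases "2 * t < g")
      case True
      then have "g * (2 * t) \<le> g * g" using \<open>0 \<le> g\<close> by (intro mult_left_mono) auto
      moreover have "g\<^sup>2 / 2 \<le> g * t - \<phi> t" using half[OF \<open>0 \<le> g\<close> \<open>g \<le> \<delta>\<close>] g by simp
      moreover have "0 \<le> \<eta> * t ^ q" using elim \<open>0 < \<eta>\<close> by simp
      ultimately show ?thesis using elim by (simp add: power2_eq_square)
    next
      case False
      have "g\<^sup>2 / 2 + \<kappa> * g ^ q - \<eta>' * g ^ q \<le> g * t - \<phi> t"
        using local[OF \<open>0 \<le> g\<close> \<open>g \<le> \<delta>\<close>] g by simp
      moreover have "t * g - g\<^sup>2 / 2 + - \<kappa> * g ^ q + \<eta>' * g ^ q \<le> t\<^sup>2 / 2 + - \<kappa> * t ^ q + \<eta> * t ^ q"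
        using elim False \<open>0 \<le> g\<close> by simp
      ultimately show ?thesis by (simp add: algebra_simps)
    qed
  qed
qed

lemma cgf_expansion_iff_legendre_expansion:
  assumes "3 \<le> q" "0 < \<kappa>"
  shows "(\<lambda>t. \<phi> t - (t\<^sup>2 / 2 - \<kappa> * t ^ q)) \<in> o[at_right 0](\<lambda>t. t ^ q)
     \<longleftrightarrow> (\<forall>\<^sub>F s in at_right 0. legendre \<phi> s \<noteq> \<infinity>) \<and>
         (\<lambda>s. real_of_ereal (legendre \<phi> s) - (s\<^sup>2 / 2 + \<kappa> * s ^ q)) \<in> o[at_right 0](\<lambda>s. s ^ q)"
proof -
  let ?cgf_lower = "\<lambda>\<eta>. \<forall>\<^sub>F t in at_right 0. t\<^sup>2 / 2 - \<kappa> * t ^ q - \<eta> * t ^ q \<le> \<phi> t"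
  let ?cgf_upper = "\<lambda>\<eta>. \<forall>\<^sub>F t in at_right 0. \<phi> t \<le> t\<^sup>2 / 2 - \<kappa> * t ^ q + \<eta> * t ^ q"
  let ?legendre_lower = "\<lambda>\<eta>. \<forall>\<^sub>F s in at_right 0. ereal (s\<^sup>2 / 2 + \<kappa> * s ^ q - \<eta> * s ^ q) \<le> legendre \<phi> s"
  let ?legendre_upper = "\<lambda>\<eta>. \<forall>\<^sub>F s in at_right 0. legendre \<phi> s \<le> ereal (s\<^sup>2 / 2 + \<kappa> * s ^ q + \<eta> * s ^ q)"
  have "?cgf_lower \<eta>" if "?legendre_upper \<eta>" for \<eta>
    using that eventually_at_right_less[of 0]
  proof eventually_elim
    case (elim t)
    have "ereal (t\<^sup>2 - \<phi> t) \<le> ereal (t\<^sup>2 / 2 + \<kappa> * t ^ q + \<eta> * t ^ q)"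
      using elim by (intro order_trans[OF legendre_ge_diagonal]) auto
    then show ?case by simp
  qed
  moreover have "?legendre_lower \<eta>" if "?cgf_upper \<eta>" for \<eta>
    using that eventually_at_right_less[of 0]
  proof eventually_elim
    case (elim s)
    then have "ereal (s\<^sup>2 / 2 + \<kappa> * s ^ q - \<eta> * s ^ q) \<le> ereal (s\<^sup>2 - \<phi> s)" by simp
    also have "\<dots> \<le> legendre \<phi> s" using elim by (intro legendre_ge_diagonal) simp
    finally show ?case .
  qed
  moreover note legendre_le_of_cgf_lower[OF assms(1) less_imp_le[OF assms(2)]]
    cgf_le_of_legendre_lower[OF assms]
  ultimately have "(\<forall>\<eta>>0. ?cgf_lower \<eta>) \<and> (\<forall>\<eta>>0. ?cgf_upper \<eta>)
      \<longleftrightarrow> (\<forall>\<eta>>0. ?legendre_lower \<eta>) \<and> (\<forall>\<eta>>0. ?legendre_upper \<eta>)"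
    by blast
  moreover have "(\<lambda>t. \<phi> t - (t\<^sup>2 / 2 - \<kappa> * t ^ q)) \<in> o[at_right 0](\<lambda>t. t ^ q)
      \<longleftrightarrow> (\<forall>\<eta>>0. ?cgf_lower \<eta>) \<and> (\<forall>\<eta>>0. ?cgf_upper \<eta>)"
    unfolding smallo_power_at_right_0_iff eventually_abs_diff_le_iff by blast
  moreover have "(\<forall>\<^sub>F s in at_right 0. legendre \<phi> s \<noteq> \<infinity>) \<and>
      (\<lambda>s. real_of_ereal (legendre \<phi> s) - (s\<^sup>2 / 2 + \<kappa> * s ^ q)) \<in> o[at_right 0](\<lambda>s. s ^ q)
      \<longleftrightarrow> (\<forall>\<eta>>0. ?legendre_lower \<eta>) \<and> (\<forall>\<eta>>0. ?legendre_upper \<eta>)"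
    using legendre_nonneg[of \<phi>] zero
    by (subst real_of_ereal_expansion_iff) (auto simp: eventually_conj_iff)
  ultimately show ?thesis by simp
qed

end

theorem proposition4p1:
  fixes M :: "'a measure" and X :: "'a \<Rightarrow> real" and \<sigma>0 :: real
  assumes "prob_space M"
    and "X \<in> borel_measurable M"
    and "integrable M X"
    and "prob_space.expectation M X = 0"
    and "prob_space.variance M X = 1"
    and "\<sigma>0 > 0"
    and "\<And>t. t \<ge> - \<sigma>0 \<Longrightarrow> integrable M (\<lambda>x. exp (t * X x))"
  shows "((\<forall>\<epsilon>>0. (SUP t\<in>{\<epsilon>..}. ereal (cgf M X t / (t\<^sup>2 / 2))) < 1)
            \<longleftrightarrow> (\<forall>\<epsilon>>0. (INF s\<in>{\<epsilon>..}. rate M X s / ereal (s\<^sup>2 / 2)) > 1))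
         \<and> (\<forall>(q::nat) (\<kappa>::real). q \<ge> 3 \<longrightarrow> \<kappa> > 0 \<longrightarrow>
              ((\<lambda>t. cgf M X t - (t\<^sup>2 / 2 - \<kappa> * t ^ q)) \<in> o[at_right 0](\<lambda>t. t ^ q)
               \<longleftrightarrow> ((\<forall>\<^sub>F s in at_right 0. rate M X s \<noteq> \<infinity>) \<and>
                    (\<lambda>s. real_of_ereal (rate M X s) - (s\<^sup>2 / 2 + \<kappa> * s ^ q))
                      \<in> o[at_right 0](\<lambda>s. s ^ q))))"
proof -
  interpret prob_space M by fact
  have "cgf_like (cgf M X) (- \<sigma>0)"
  proof
    show "convex_on {- \<sigma>0..} (cgf M X)" using assms(7) by (intro convex_on_cgf) auto
    show "cgf M X 0 = 0" by (rule cgf_zero)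
    show "0 \<le> cgf M X t" if "0 \<le> t" for t
      using assms(3,4,6,7) that by (intro cgf_nonneg) auto
  qed (use assms(6) in simp)
  then show ?thesis unfolding rate_eq_legendre
    using cgf_like.quadratic_gap_iff cgf_like.cgf_expansion_iff_legendre_expansion by blast
qed

end
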